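(* Let $B_1$ and $B_2$ be $m$-level rook equivalent singleton boards, both written with $n$ columns, such that $\{B_1,B_2\}$ is an edge of the $m$-level rook equivalence graph. Then the $m$-level root vectors $\xi_m(B_1)$ and $\xi_m(B_2)$ differ only in two positions, whose entries are swapped. That is, if $\xi_m(B_1)=\langle z_1,\ldots,z_{i_1},\ldots,z_{i_2},\ldots,z_n\rangle$ then $\xi_m(B_2)=\langle z_1,\ldots,z_{i_2},\ldots,z_{i_1},\ldots,z_n\rangle$ for some $1\le i_1<i_2\le n$ with $z_{i_1}\ne z_{i_2}$.
   Context: Fix an integer $m>0$. A Ferrers board is given by a weakly increasing sequence of non-negative integers $B=(b_1,\ldots,b_n)$ of column heights (cells in column $i$, rows $1,\ldots,b_i$, of the first quadrant); prepending height-$0$ columns on the left does not change the board, and boards are compared with the same number of columns by such padding. The rows are partitioned into levels: level $t$ consists of rows $(t-1)m+1,\ldots,tm$. An $m$-level rook placement of $k$ rooks is a set of $k$ cells of $B$, no two in the same level or the same column; $r_{k,m}(B)$ is their number, and two boards are $m$-level rook equivalent if they have equal $r_{k,m}$ for all $k\ge0$. For an integer $o$, $\lfloor o\rfloor_m$ is the largest multiple of $m$ that is $\le o$. $B$ is singleton if for each $i<n$, $b_i-\lfloor b_i\rfloor_m\ne0$ implies $\lfloor b_i\rfloor_m<\lfloor b_{i+1}\rfloor_m$. The $m$-level root vector of $B$ is $\xi_m(B)=\langle 0-b_1,m-b_2,\ldots,m(n-1)-b_n\rangle$. The $m$-level rook equivalence graph of the class of a singleton board $B$ has as vertices all singleton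 boards $m$-level rook equivalent to $B$, and $\{B_1,B_2\}$ is an edge iff, written with the same number of columns, $B_1$ and $B_2$ differ in exactly two columns $i,j$, where $B_1$ has $k$ more cells than $B_2$ in column $i$ and $k$ fewer in column $j$, for some $k>0$. *)

theory Defs
  imports Main
begin

text \<open>A Ferrers board is a list of column heights (b_1,...,b_n), weakly increasing.
  Column i (1-based) contains the cells (i, r) with 1 \<le> r \<le> b_i.\<close>

definition ferrers :: "nat list \<Rightarrow> bool" where
  "ferrers B \<longleftrightarrow> sorted B"

definition cells :: "nat list \<Rightarrow> (nat \<times> nat) set" where
  "cells B = {(i, r). 1 \<le> i \<and> i \<le> length B \<and> 1 \<le> r \<and> r \<le> B ! (i - 1)}"

text \<open>Level of row r (rows numbered from 1): level t consists of rows (t-1)m+1..tm;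
  we use the 0-based level index (r-1) div m.\<close>
definition level :: "nat \<Rightarrow> nat \<Rightarrow> nat" where
  "level m r = (r - 1) div m"

definition m_level_rook_placements :: "nat \<Rightarrow> nat \<Rightarrow> nat list \<Rightarrow> (nat \<times> nat) set set" where
  "m_level_rook_placements m k B =
     {S. S \<subseteq> cells B \<and> card S = k \<and>
         (\<forall>c\<in>S. \<forall>d\<in>S. c \<noteq> d \<longrightarrow> fst c \<noteq> fst d \<and> level m (snd c) \<noteq> level m (snd d))}"

definition rook_num :: "nat \<Rightarrow> nat \<Rightarrow> nat list \<Rightarrow> nat" where
  "rook_num k m B = card (m_level_rook_placements m k B)"

definition m_level_rook_equiv :: "nat \<Rightarrow> nat list \<Rightarrow> nat list \<Rightarrow> bool" where
  "m_level_rook_equiv m B1 B2 \<longleftrightarrow> (\<forall>k. rook_num k m B1 = rook_num k m B2)"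

definition floor_m :: "nat \<Rightarrow> nat \<Rightarrow> nat" where
  "floor_m m b = b - b mod m"

definition singleton_board :: "nat \<Rightarrow> nat list \<Rightarrow> bool" where
  "singleton_board m B \<longleftrightarrow>
     (\<forall>i. i + 1 < length B \<longrightarrow> B ! i - floor_m m (B ! i) \<noteq> 0 \<longrightarrow>
          floor_m m (B ! i) < floor_m m (B ! (i + 1)))"

text \<open>Root vector, 0-based: entry i is m*i - b_{i+1}.\<close>
definition root_vector :: "nat \<Rightarrow> nat list \<Rightarrow> int list" where
  "root_vector m B = map (\<lambda>i. int (m * i) - int (B ! i)) [0..<length B]"

definition pad :: "nat \<Rightarrow> nat list \<Rightarrow> nat list" where
  "pad N B = replicate (N - length B) 0 @ B"

definition rook_graph_edge :: "nat \<Rightarrow> nat list \<Rightarrow> nat list \<Rightarrow> bool" where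
  "rook_graph_edge m B1 B2 \<longleftrightarrow>
     ferrers B1 \<and> ferrers B2 \<and> singleton_board m B1 \<and> singleton_board m B2 \<and>
     m_level_rook_equiv m B1 B2 \<and>
     (let N = max (length B1) (length B2); C1 = pad N B1; C2 = pad N B2 in
       \<exists>i j k. i < N \<and> j < N \<and> i \<noteq> j \<and> k > 0 \<and>
         C1 ! i = C2 ! i + k \<and> C1 ! j + k = C2 ! j \<and>
         (\<forall>l. l < N \<longrightarrow> l \<noteq> i \<longrightarrow> l \<noteq> j \<longrightarrow> C1 ! l = C2 ! l))"

end

theory Submission
  imports Defs
begin

text \<open>For a singleton board, every level met by a rook in an earlier column lies entirely
  inside the last column, so adding a column of height b to a board B gives the recursion
  r_{k+1}(B b) = r_{k+1}(B) + r_k(B) (b - m k). It yields the m-level factorization theorem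
  \<Sum>_k r_k(B) x(x - m)...(x - m(n - k - 1)) = \<Prod>_i (x - \<xi>_i), where \<xi> = \<xi>_m(B).
  Rook equivalent boards with n columns therefore have equal products. Along an edge only two
  factors change, from a and b to a - k and b + k with k > 0, so evaluating where all
  factors are nonzero gives a = b + k: the two entries of the root vector are swapped.\<close>

lemma finite_cells: "finite (cells B)"
proof -
  have "cells B = (SIGMA i:{1..length B}. {1..B ! (i - 1)})"
    unfolding cells_def by auto
  then show ?thesis by simp
qed

lemma cells_snoc: "cells (B @ [b]) = cells B \<union> {(length B + 1, r) | r. 1 \<le> r \<and> r \<le> b}"
  unfolding cells_def by (auto simp: nth_append le_Suc_eq split: if_splits)

lemma m_level_rook_placements_iff:
  "S \<in> m_level_rook_placements m k B \<longleftrightarrow>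
     S \<subseteq> cells B \<and> card S = k \<and> inj_on fst S \<and> inj_on (\<lambda>c. level m (snd c)) S"
  unfolding m_level_rook_placements_def inj_on_def by blast

lemma m_level_rook_placementsD:
  assumes "S \<in> m_level_rook_placements m k B"
  shows "S \<subseteq> cells B" and "finite S" and "card S = k"
    and "inj_on fst S" and "inj_on (\<lambda>c. level m (snd c)) S"
  using assms finite_subset[OF _ finite_cells] by (auto simp: m_level_rook_placements_iff)

lemma finite_m_level_rook_placements: "finite (m_level_rook_placements m k B)"
  by (rule finite_subset[of _ "Pow (cells B)"])
    (auto simp: m_level_rook_placements_def finite_cells)

lemma m_level_rook_placements_0: "m_level_rook_placements m 0 B = {{}}"
  unfolding m_level_rook_placements_def
  by (auto simp: card_eq_0_iff dest: finite_subset[OF _ finite_cells])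

lemma rook_num_0: "rook_num 0 m B = 1"
  by (simp add: rook_num_def m_level_rook_placements_0)

lemma rook_num_eq_0:
  assumes "length B < k"
  shows "rook_num k m B = 0"
proof -
  have "k \<le> length B" if S: "S \<in> m_level_rook_placements m k B" for S
  proof -
    have "fst ` S \<subseteq> {1..length B}"
      using m_level_rook_placementsD(1)[OF S] by (auto simp: cells_def)
    then have "card (fst ` S) \<le> length B"
      using card_mono[of "{1..length B}"] by fastforce
    then show ?thesis
      using card_image m_level_rook_placementsD(3-4)[OF S] by metis
  qed
  then show ?thesis
    using assms by (fastforce simp: rook_num_def)
qed

lemma singleton_board_div_less:
  assumes "m > 0" and "sorted B" and "singleton_board m B"
    and "i < j" and "j < length B" and "B ! i mod m \<noteq> 0"
  shows "B ! i div m < B ! j div m"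
proof -
  have "B ! i - floor_m m (B ! i) \<noteq> 0"
    using assms(6) by (simp add: floor_m_def le_mod_geq)
  then have "floor_m m (B ! i) < floor_m m (B ! (i + 1))"
    using assms(3-5) unfolding singleton_board_def by simp
  then have "B ! i div m < B ! (i + 1) div m"
    by (simp add: floor_m_def minus_mod_eq_mult_div)
  also have "\<dots> \<le> B ! j div m"
    using assms(2,4,5) by (simp add: div_le_mono sorted_nth_mono)
  finally show ?thesis .
qed

lemma level_mono: "r \<le> s \<Longrightarrow> level m r \<le> level m s"
  unfolding level_def by (simp add: div_le_mono)

text \<open>So each rook in an earlier column blocks exactly m cells of the last column.\<close>
lemma singleton_board_level_below_last:
  assumes m: "m > 0" and sorted: "sorted (B @ [b])" and singleton: "singleton_board m (B @ [b])"
    and cell: "(i, r) \<in> cells B"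
  shows "(level m r + 1) * m \<le> b"
proof -
  define a where "a = B ! (i - 1)"
  have i: "i - 1 < length B" and r: "1 \<le> r" "r \<le> a"
    using cell by (auto simp: cells_def a_def)
  have a: "(B @ [b]) ! (i - 1) = a" "(B @ [b]) ! length B = b"
    using i by (simp_all add: a_def nth_append)
  have "level m a < b div m"
  proof (cases "a mod m = 0")
    case True
    then have "a - 1 < a div m * m"
      using r by (simp add: mod_0_imp_dvd)
    then have "level m a < a div m"
      using m by (simp add: level_def div_less_iff_less_mult)
    also have "\<dots> \<le> b div m"
      using sorted_nth_mono[OF sorted, of "i - 1" "length B"] a i by (simp add: div_le_mono)
    finally show ?thesis .
  next
    case False
    then have "level m a \<le> a div m"
      by (simp add: level_def div_le_mono)
    also have "\<dots> < b div m"
      using singleton_board_div_less[OF m sorted singleton, of "i - 1" "length B"] False a i by simp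
    finally show ?thesis .
  qed
  then have "level m r < b div m"
    using level_mono[OF r(2), of m] by linarith
  then show ?thesis
    using m by (simp add: less_eq_div_iff_mult_less_eq flip: Suc_le_eq)
qed

definition levels :: "nat \<Rightarrow> (nat \<times> nat) set \<Rightarrow> nat set" where
  "levels m S = (\<lambda>c. level m (snd c)) ` S"

definition free_rows :: "nat \<Rightarrow> nat \<Rightarrow> (nat \<times> nat) set \<Rightarrow> nat set" where
  "free_rows m b S = {r \<in> {1..b}. level m r \<notin> levels m S}"

lemma level_eq_iff:
  assumes "m > 0" and "1 \<le> r"
  shows "level m r = l \<longleftrightarrow> l * m < r \<and> r \<le> (l + 1) * m"
proof -
  have "level m r = l \<longleftrightarrow> l \<le> (r - 1) div m \<and> (r - 1) div m < l + 1"
    unfolding level_def by linarith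
  also have "\<dots> \<longleftrightarrow> l * m < r \<and> r \<le> (l + 1) * m"
    using assms by (simp add: less_eq_div_iff_mult_less_eq div_less_iff_less_mult, linarith)
  finally show ?thesis .
qed

lemma card_rows_of_level:
  assumes "m > 0" and "(l + 1) * m \<le> b"
  shows "card {r \<in> {1..b}. level m r = l} = m"
proof -
  have "{r \<in> {1..b}. level m r = l} = {l * m <.. (l + 1) * m}"
  proof (rule set_eqI)
    fix r
    show "r \<in> {r \<in> {1..b}. level m r = l} \<longleftrightarrow> r \<in> {l * m <.. (l + 1) * m}"
      using level_eq_iff[OF assms(1), of r l] assms(2) by auto
  qed
  then show ?thesis
    by simp
qed

lemma card_free_rows:
  assumes m: "m > 0" and sorted: "sorted (B @ [b])" and singleton: "singleton_board m (B @ [b])"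
    and S: "S \<in> m_level_rook_placements m k B"
  shows "m * k \<le> b" and "card (free_rows m b S) = b - m * k"
proof -
  define used where "used = {r \<in> {1..b}. level m r \<in> levels m S}"
  have card_levels: "card (levels m S) = k"
    using m_level_rook_placementsD[OF S] by (simp add: levels_def card_image)
  have below: "(l + 1) * m \<le> b" if "l \<in> levels m S" for l
    using that m_level_rook_placementsD(1)[OF S]
      singleton_board_level_below_last[OF m sorted singleton]
    by (auto simp: levels_def)
  have "used = (\<Union>l\<in>levels m S. {r \<in> {1..b}. level m r = l})"
    by (auto simp: used_def)
  also have "card \<dots> = (\<Sum>l\<in>levels m S. card {r \<in> {1..b}. level m r = l})"
    using m_level_rook_placementsD(2)[OF S] by (subst card_UN_disjoint) (auto simp: levels_def)
  also have "\<dots> = m * k"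
    using card_rows_of_level[OF m] below card_levels by simp
  finally have card_used: "card used = m * k" .
  have used: "used \<subseteq> {1..b}"
    by (auto simp: used_def)
  then show "m * k \<le> b"
    using card_mono[of "{1..b}" used] card_used by simp
  have "free_rows m b S = {1..b} - used"
    by (auto simp: free_rows_def used_def)
  then show "card (free_rows m b S) = b - m * k"
    using card_Diff_subset[OF _ used] finite_subset[OF used] card_used by simp
qed

lemma last_column_notin_placement:
  assumes "S \<in> m_level_rook_placements m k B"
  shows "(length B + 1, r) \<notin> S"
  using assms by (auto simp: m_level_rook_placements_iff cells_def)

lemma insert_last_column_placement:
  assumes S: "S \<in> m_level_rook_placements m k B" and r: "r \<in> free_rows m b S"
  shows "insert (length B + 1, r) S \<in> m_level_rook_placements m (Suc k) (B @ [b])"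
proof -
  have "length B + 1 \<notin> fst ` S"
    using S by (force simp: m_level_rook_placements_iff cells_def)
  moreover have "level m r \<notin> (\<lambda>c. level m (snd c)) ` S"
    using r by (simp add: free_rows_def levels_def)
  moreover have "(length B + 1, r) \<in> cells (B @ [b])"
    using r by (auto simp: free_rows_def cells_snoc)
  ultimately show ?thesis
    using S m_level_rook_placementsD(2)[OF S] last_column_notin_placement[OF S]
    by (auto simp: m_level_rook_placements_iff cells_snoc rev_image_eqI)
qed

lemma remove_last_column_placement:
  assumes S: "S \<in> m_level_rook_placements m (Suc k) (B @ [b])" and c: "(length B + 1, r) \<in> S"
  shows "S - {(length B + 1, r)} \<in> m_level_rook_placements m k B"
    and "r \<in> free_rows m b (S - {(length B + 1, r)})"
proof -
  let ?S' = "S - {(length B + 1, r)}"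
  have "?S' \<subseteq> cells B"
  proof
    fix d assume d: "d \<in> ?S'"
    then have "fst d \<noteq> length B + 1"
      using S c inj_onD[of fst S d "(length B + 1, r)"] by (auto simp: m_level_rook_placements_iff)
    then show "d \<in> cells B"
      using S d by (auto simp: m_level_rook_placements_iff cells_snoc)
  qed
  then show "?S' \<in> m_level_rook_placements m k B"
    using S c m_level_rook_placementsD(2)[OF S]
    by (auto simp: m_level_rook_placements_iff inj_on_diff)
  have "(length B + 1, r) \<in> cells (B @ [b])"
    using S c by (auto simp: m_level_rook_placements_iff)
  then show "r \<in> free_rows m b ?S'"
    using S c inj_onD[of "\<lambda>c. level m (snd c)" S "(length B + 1, r)"]
    by (auto simp: m_level_rook_placements_iff free_rows_def levels_def cells_def)
qed

lemma m_level_rook_placements_snoc: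
  "m_level_rook_placements m (Suc k) (B @ [b]) =
     m_level_rook_placements m (Suc k) B \<union>
     (\<lambda>(S, r). insert (length B + 1, r) S) ` (SIGMA S : m_level_rook_placements m k B. free_rows m b S)"
  (is "?lhs = ?old \<union> ?new")
proof (intro equalityI subsetI)
  fix S assume S: "S \<in> ?lhs"
  show "S \<in> ?old \<union> ?new"
  proof (cases "S \<subseteq> cells B")
    case True
    then show ?thesis
      using S by (simp add: m_level_rook_placements_iff)
  next
    case False
    then obtain r where c: "(length B + 1, r) \<in> S"
      using S by (auto simp: m_level_rook_placements_iff cells_snoc)
    then show ?thesis
      using remove_last_column_placement[OF S c]
      by (auto intro!: image_eqI[where x = "(S - {(length B + 1, r)}, r)"])
  qed
next
  fix S assume "S \<in> ?old \<union> ?new"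
  then show "S \<in> ?lhs"
  proof
    assume "S \<in> ?old"
    then show ?thesis
      by (auto simp: m_level_rook_placements_iff cells_snoc)
  next
    assume "S \<in> ?new"
    then show ?thesis
      using insert_last_column_placement by auto
  qed
qed

lemma rook_num_snoc:
  assumes m: "m > 0" and sorted: "sorted (B @ [b])" and singleton: "singleton_board m (B @ [b])"
  shows "int (rook_num (Suc k) m (B @ [b])) =
           int (rook_num (Suc k) m B) + int (rook_num k m B) * (int b - int (m * k))"
proof -
  let ?P = "\<lambda>k. m_level_rook_placements m k B"
  let ?ins = "\<lambda>(S, r). insert (length B + 1, r) S"
  let ?Sigma = "SIGMA S : ?P k. free_rows m b S"
  have finite_Sigma: "finite ?Sigma"
    by (auto simp: finite_m_level_rook_placements free_rows_def)
  have "inj_on ?ins ?Sigma"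
  proof (rule inj_onI)
    fix x y assume "x \<in> ?Sigma" "y \<in> ?Sigma" and eq: "?ins x = ?ins y"
    then obtain S r S' r' where xy: "x = (S, r)" "y = (S', r')" and S: "S \<in> ?P k" "S' \<in> ?P k"
      by auto
    have notin: "(length B + 1, c) \<notin> S" "(length B + 1, c) \<notin> S'" for c
      using S last_column_notin_placement by blast+
    then have "r = r'"
      using eq unfolding xy by blast
    then have "S = S'"
      using eq notin insert_ident[of "(length B + 1, r)" S S'] unfolding xy by simp
    with \<open>r = r'\<close> show "x = y"
      unfolding xy by simp
  qed
  then have card_new: "card (?ins ` ?Sigma) = card ?Sigma"
    by (rule card_image)
  have "int (card ?Sigma) = (\<Sum>S\<in>?P k. int (card (free_rows m b S)))"
    by (simp add: card_SigmaI finite_m_level_rook_placements free_rows_def)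
  also have "\<dots> = (\<Sum>S\<in>?P k. int b - int (m * k))"
    using card_free_rows[OF m sorted singleton] by (simp add: of_nat_diff)
  also have "\<dots> = int (rook_num k m B) * (int b - int (m * k))"
    by (simp add: rook_num_def)
  finally have card_Sigma: "int (card ?Sigma) = int (rook_num k m B) * (int b - int (m * k))" .
  have "?P (Suc k) \<inter> ?ins ` ?Sigma = {}"
    using last_column_notin_placement by blast
  then have "rook_num (Suc k) m (B @ [b]) = card (?P (Suc k)) + card (?ins ` ?Sigma)"
    unfolding rook_num_def m_level_rook_placements_snoc
    by (simp add: card_Un_disjoint finite_m_level_rook_placements finite_Sigma)
  then show ?thesis
    using card_new card_Sigma by (simp add: rook_num_def)
qed

definition m_falling :: "nat \<Rightarrow> int \<Rightarrow> nat \<Rightarrow> int" where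
  "m_falling m x k = (\<Prod>t<k. x - int (m * t))"

definition rook_sum :: "nat \<Rightarrow> nat list \<Rightarrow> int \<Rightarrow> int" where
  "rook_sum m B x = (\<Sum>k\<le>length B. int (rook_num k m B) * m_falling m x (length B - k))"

lemma rook_sum_snoc:
  assumes m: "m > 0" and sorted: "sorted (B @ [b])" and singleton: "singleton_board m (B @ [b])"
  shows "rook_sum m (B @ [b]) x = rook_sum m B x * (x + int b - int (m * length B))"
proof -
  let ?n = "length B" and ?F = "m_falling m x"
  define r where "r k = int (rook_num k m B)" for k
  define s where "s k = int (rook_num k m (B @ [b]))" for k
  have s_Suc: "s (Suc k) = r (Suc k) + r k * (int b - int (m * k))" for k
    unfolding r_def s_def by (rule rook_num_snoc[OF m sorted singleton])
  have s_0: "s 0 = r 0"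
    by (simp add: r_def s_def rook_num_0)
  have "rook_sum m (B @ [b]) x = s 0 * ?F (Suc ?n) + (\<Sum>k\<le>?n. s (Suc k) * ?F (?n - k))"
    unfolding rook_sum_def s_def length_append_singleton by (subst sum.atMost_Suc_shift) simp
  also have "\<dots> = (r 0 * ?F (Suc ?n) + (\<Sum>k\<le>?n. r (Suc k) * ?F (?n - k)))
                   + (\<Sum>k\<le>?n. r k * (int b - int (m * k)) * ?F (?n - k))"
    by (simp add: s_Suc s_0 distrib_right sum.distrib)
  also have "r 0 * ?F (Suc ?n) + (\<Sum>k\<le>?n. r (Suc k) * ?F (?n - k))
               = (\<Sum>k\<le>?n. r k * ?F (?n - k) * (x - int (m * (?n - k))))"
  proof -
    have "r (Suc ?n) = 0"
      by (simp add: r_def rook_num_eq_0)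
    have "r 0 * ?F (Suc ?n) + (\<Sum>k\<le>?n. r (Suc k) * ?F (?n - k))
            = (\<Sum>k\<le>Suc ?n. r k * ?F (Suc ?n - k))"
      by (subst sum.atMost_Suc_shift) simp
    also have "\<dots> = (\<Sum>k\<le>?n. r k * ?F (Suc ?n - k))"
      using \<open>r (Suc ?n) = 0\<close> by simp
    also have "\<dots> = (\<Sum>k\<le>?n. r k * ?F (?n - k) * (x - int (m * (?n - k))))"
      by (intro sum.cong) (simp_all add: Suc_diff_le m_falling_def)
    finally show ?thesis .
  qed
  also have "(\<Sum>k\<le>?n. r k * ?F (?n - k) * (x - int (m * (?n - k))))
               + (\<Sum>k\<le>?n. r k * (int b - int (m * k)) * ?F (?n - k))
             = (\<Sum>k\<le>?n. r k * ?F (?n - k) * (x + int b - int (m * ?n)))"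
    unfolding sum.distrib[symmetric]
    by (intro sum.cong refl) (simp add: of_nat_diff algebra_simps)
  also have "\<dots> = rook_sum m B x * (x + int b - int (m * ?n))"
    by (simp add: rook_sum_def r_def sum_distrib_right)
  finally show ?thesis .
qed

lemma singleton_board_appendD:
  assumes "singleton_board m (B @ C)"
  shows "singleton_board m B"
  unfolding singleton_board_def
proof (intro allI impI)
  fix i assume "i + 1 < length B" and "B ! i - floor_m m (B ! i) \<noteq> 0"
  moreover have "(B @ C) ! i = B ! i" and "(B @ C) ! (i + 1) = B ! (i + 1)"
    using \<open>i + 1 < length B\<close> by (simp_all add: nth_append)
  ultimately show "floor_m m (B ! i) < floor_m m (B ! (i + 1))"
    using assms unfolding singleton_board_def by (metis length_append trans_less_add1)
qed

theorem rook_sum_factorization: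
  assumes "m > 0" and "sorted B" and "singleton_board m B"
  shows "rook_sum m B x = (\<Prod>i<length B. x - root_vector m B ! i)"
  using assms(2,3)
proof (induction B rule: rev_induct)
  case Nil
  then show ?case
    by (simp add: rook_sum_def rook_num_0 m_falling_def root_vector_def)
next
  case (snoc b B)
  have "sorted B" and "singleton_board m B"
    using snoc.prems by (auto simp: sorted_append intro: singleton_board_appendD)
  then show ?case
    using snoc rook_sum_snoc[OF assms(1) snoc.prems] by (simp add: root_vector_def nth_append)
qed

lemma prod_eq_two_factors_changed:
  fixes f g :: "'a \<Rightarrow> 'b :: idom"
  assumes "finite A" and "i \<in> A" and "j \<in> A" and "i \<noteq> j"
    and "prod f A = prod g A"
    and "\<And>l. l \<in> A - {i, j} \<Longrightarrow> f l = g l" and "\<And>l. l \<in> A - {i, j} \<Longrightarrow> g l \<noteq> 0"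
    and "f i = g i + k" and "g j = f j + k" and "k \<noteq> 0"
  shows "f j = g i" and "f i = g j"
proof -
  have split: "prod h A = h i * h j * prod h (A - {i, j})" for h :: "'a \<Rightarrow> 'b"
  proof -
    have "prod h A = h i * (h j * prod h (A - {i} - {j}))"
      using assms(1-4) by (simp add: prod.remove[of A i] prod.remove[of "A - {i}" j])
    also have "A - {i} - {j} = A - {i, j}"
      by auto
    finally show ?thesis
      by (simp add: mult.assoc)
  qed
  have "prod f (A - {i, j}) = prod g (A - {i, j})"
    using assms(6) by (rule prod.cong[OF refl])
  moreover have "prod g (A - {i, j}) \<noteq> 0"
    using assms(1,7) by simp
  ultimately have "f i * f j = g i * g j"
    using assms(5) split[of f] split[of g] by simp
  then have "k * (f j - g i) = 0"
    using assms(8,9) by (simp add: algebra_simps)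
  then show "f j = g i"
    using assms(10) by simp
  then show "f i = g j"
    using assms(8,9) by (simp add: add.commute)
qed

lemma swap_of_agree_elsewhere:
  assumes "length ys = length xs" and "a < length xs" and "b < length xs"
    and "\<And>l. l < length xs \<Longrightarrow> l \<noteq> a \<Longrightarrow> l \<noteq> b \<Longrightarrow> ys ! l = xs ! l"
    and "ys ! a = xs ! b" and "ys ! b = xs ! a"
  shows "ys = xs[a := xs ! b, b := xs ! a]"
  using assms by (intro nth_equalityI) (auto simp: nth_list_update)

lemma length_root_vector [simp]: "length (root_vector m B) = length B"
  by (simp add: root_vector_def)

lemma nth_root_vector_le:
  assumes "l < length B"
  shows "root_vector m B ! l \<le> int (m * length B)"
proof -
  have "root_vector m B ! l \<le> int (m * l)"
    using assms by (simp add: root_vector_def)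
  also have "\<dots> \<le> int (m * length B)"
    using assms by (simp only: of_nat_le_iff mult_le_mono2 less_imp_le)
  finally show ?thesis .
qed

lemma ex_ordered_transposition:
  assumes "ys = xs[i := xs ! j, j := xs ! i]" and "xs ! i \<noteq> xs ! j" and "i < n" and "j < n"
  shows "\<exists>i1 i2. i1 < i2 \<and> i2 < n \<and> xs ! i1 \<noteq> xs ! i2 \<and> ys = xs[i1 := xs ! i2, i2 := xs ! i1]"
proof (cases "i < j")
  case True
  then show ?thesis
    using assms by blast
next
  case False
  then have "j < i"
    using assms(2) by (cases "i = j") auto
  then show ?thesis
    using assms by (metis list_update_swap)
qed

theorem theorem17:
  fixes m n :: nat and B1 B2 :: "nat list"
  assumes "m > 0"
    and "length B1 = n" and "length B2 = n"
    and "ferrers B1" and "ferrers B2"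
    and "singleton_board m B1" and "singleton_board m B2"
    and "m_level_rook_equiv m B1 B2"
    and "rook_graph_edge m B1 B2"
  shows "\<exists>i1 i2. i1 < i2 \<and> i2 < n \<and>
           root_vector m B1 ! i1 \<noteq> root_vector m B1 ! i2 \<and>
           root_vector m B2 = (root_vector m B1)[i1 := root_vector m B1 ! i2,
                                                i2 := root_vector m B1 ! i1]"
proof -
  let ?z1 = "root_vector m B1" and ?z2 = "root_vector m B2"
  obtain i j k where ij: "i < n" "j < n" "i \<noteq> j" "k > 0"
    and moved: "?z2 ! i = ?z1 ! i + int k" "?z1 ! j = ?z2 ! j + int k"
    and fixed: "\<And>l. l < n \<Longrightarrow> l \<noteq> i \<Longrightarrow> l \<noteq> j \<Longrightarrow> ?z1 ! l = ?z2 ! l"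
    using assms(2,3,9) by (auto simp: rook_graph_edge_def pad_def root_vector_def)
  define x where "x = int (m * n) + 1"
  have "rook_sum m B1 x = rook_sum m B2 x"
    using assms(2,3,8) by (simp add: rook_sum_def m_level_rook_equiv_def)
  then have "(\<Prod>l<n. x - ?z1 ! l) = (\<Prod>l<n. x - ?z2 ! l)"
    using assms rook_sum_factorization by (simp add: ferrers_def)
  moreover have "x - ?z2 ! l \<noteq> 0" if "l < n" for l
    using nth_root_vector_le[of l B2 m] that assms(3) by (simp add: x_def)
  ultimately have "?z1 ! j = ?z2 ! i" and "?z1 ! i = ?z2 ! j"
    using prod_eq_two_factors_changed[of "{..<n}" i j "\<lambda>l. x - ?z1 ! l" "\<lambda>l. x - ?z2 ! l" "int k"]
      ij moved fixed
    by auto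
  then have "?z2 = ?z1[i := ?z1 ! j, j := ?z1 ! i]"
    using ij fixed assms(2,3) by (intro swap_of_agree_elsewhere) auto
  moreover have "?z1 ! i \<noteq> ?z1 ! j"
    using \<open>?z1 ! j = ?z2 ! i\<close> moved ij by simp
  ultimately show ?thesis
    using ij(1,2) by (rule ex_ordered_transposition)
qed

end
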